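(* Let $X$ be a Banach space, $C\subset X$ a nonempty generalized polyhedral convex set, and $f:X\to\mathbb R$ twice continuously Fréchet differentiable on $X$. If $\bar x$ is a local minimum of $\min\{f(x)\mid x\in C\}$, then: (c0) $\langle\nabla f(\bar x),v\rangle\ge0$ for all $v\in T_C(\bar x)$; (c1) for every $v\in T_C(\bar x)$ with $\langle\nabla f(\bar x),v\rangle=0$, one has $\langle\nabla f(\bar x),w\rangle\ge0$ for all $w\in T^2_C(\bar x,v)$; (c2) $\langle\nabla^2 f(\bar x)v,v\rangle\ge0$ for all $v\in T_C(\bar x)$ with $\langle\nabla f(\bar x),v\rangle=0$. *)

theory Defs
  imports "HOL-Analysis.Analysis"
begin

definition gen_polyhedral :: "'a::real_normed_vector set \<Rightarrow> bool" where
  "gen_polyhedral C \<longleftrightarrow>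
     (\<exists>(L::'a set) (m::nat) (g::nat \<Rightarrow> ('a \<Rightarrow>\<^sub>L real)) (\<alpha>::nat \<Rightarrow> real).
        affine L \<and> closed L \<and> L \<noteq> {} \<and>
        C = {x \<in> L. \<forall>i<m. blinfun_apply (g i) x \<le> \<alpha> i})"

definition tangent_cone :: "'a::real_normed_vector set \<Rightarrow> 'a \<Rightarrow> 'a set" where
  "tangent_cone C x = {v. \<exists>(t::nat \<Rightarrow> real) (vs::nat \<Rightarrow> 'a).
      (\<forall>n. t n > 0) \<and> t \<longlonglongrightarrow> 0 \<and> vs \<longlonglongrightarrow> v \<and>
      (\<forall>n. x + t n *\<^sub>R vs n \<in> C)}"

definition second_order_tangent_set :: "'a::real_normed_vector set \<Rightarrow> 'a \<Rightarrow> 'a \<Rightarrow> 'a set" where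
  "second_order_tangent_set C x v = {w. \<exists>(t::nat \<Rightarrow> real) (ws::nat \<Rightarrow> 'a).
      (\<forall>n. t n > 0) \<and> t \<longlonglongrightarrow> 0 \<and> ws \<longlonglongrightarrow> w \<and>
      (\<forall>n. x + t n *\<^sub>R v + ((t n)\<^sup>2 / 2) *\<^sub>R ws n \<in> C)}"

definition local_min_on :: "('a::metric_space \<Rightarrow> real) \<Rightarrow> 'a set \<Rightarrow> 'a \<Rightarrow> bool" where
  "local_min_on f C x \<longleftrightarrow> x \<in> C \<and>
     (\<exists>\<epsilon>>0. \<forall>y\<in>C. dist y x < \<epsilon> \<longrightarrow> f x \<le> f y)"

end

theory Submission
  imports Defs
begin

text \<open>At a local minimiser no tangent direction can be a first-order descent direction,
  which gives (c0). As \<open>C\<close> is convex, \<open>xb + u \<in> C\<close> makes \<open>u\<close> a tangent direction, so the points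
  \<open>xb + t v + (t\<^sup>2/2) w\<^sub>n\<close> of \<open>C\<close> give \<open>Df xb w\<^sub>n \<ge> 0\<close> whenever \<open>Df xb v = 0\<close>; hence (c1).
  For (c2) polyhedrality is essential: a tangent direction \<open>v\<close> of a generalized polyhedral set is
  feasible, \<open>xb + s v \<in> C\<close> for all small \<open>s > 0\<close> (the affine part contains the whole line, inactive
  constraints stay inactive, active ones have \<open>g v \<le> 0\<close>). On that segment
  \<open>\<phi> s = f (xb + s v)\<close> has \<open>\<phi>' 0 = 0\<close>, so \<open>\<phi>'' 0 < 0\<close> would make \<open>\<phi>\<close> decrease right of \<open>0\<close>.\<close>

lemma has_derivative_remainder_quotient_tendsto:
  fixes f :: "'a::real_normed_vector \<Rightarrow> 'b::real_normed_vector"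
  assumes "(f has_derivative D) (at x)" and tpos: "\<And>n. t n > 0"
    and "t \<longlonglongrightarrow> 0" and "vs \<longlonglongrightarrow> v"
  shows "(\<lambda>n. (f (x + t n *\<^sub>R vs n) - f x - D (t n *\<^sub>R vs n)) /\<^sub>R t n) \<longlonglongrightarrow> 0"
proof (rule tendstoI)
  fix e :: real assume "e > 0"
  obtain M where M: "M > 0" "\<And>n. norm (vs n) \<le> M"
    using convergent_imp_Bseq[OF convergentI[OF assms(4)]] unfolding Bseq_def by auto
  obtain d where d: "d > 0" "\<And>y. norm (y - x) < d \<Longrightarrow>
      norm (f y - f x - D (y - x)) \<le> e / (2 * M) * norm (y - x)"
    using assms(1) \<open>e > 0\<close> M unfolding has_derivative_at_alt
    by (metis divide_pos_pos mult_pos_pos zero_less_numeral)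
  have "eventually (\<lambda>n. t n < d / M) sequentially"
    using assms(3) d M by (intro order_tendstoD(2)) auto
  then show "eventually (\<lambda>n. dist ((f (x + t n *\<^sub>R vs n) - f x - D (t n *\<^sub>R vs n)) /\<^sub>R t n) 0 < e)
               sequentially"
  proof eventually_elim
    case (elim n)
    have h_bound: "norm (t n *\<^sub>R vs n) \<le> t n * M"
      using M(2)[of n] tpos[of n] by (simp add: mult_left_mono)
    also have "\<dots> < d" using elim M by (simp add: pos_less_divide_eq)
    finally have "norm (f (x + t n *\<^sub>R vs n) - f x - D (t n *\<^sub>R vs n))
                    \<le> e / (2 * M) * norm (t n *\<^sub>R vs n)"
      using d(2)[of "x + t n *\<^sub>R vs n"] by simp
    also have "\<dots> \<le> e / (2 * M) * (t n * M)"
      using h_bound \<open>e > 0\<close> M by (intro mult_left_mono) auto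
    also have "\<dots> = e / 2 * t n" using M by simp
    finally have "norm (f (x + t n *\<^sub>R vs n) - f x - D (t n *\<^sub>R vs n)) / t n \<le> e / 2"
      using tpos[of n] by (simp add: pos_divide_le_eq)
    moreover have "norm ((f (x + t n *\<^sub>R vs n) - f x - D (t n *\<^sub>R vs n)) /\<^sub>R t n)
        = norm (f (x + t n *\<^sub>R vs n) - f x - D (t n *\<^sub>R vs n)) / t n"
      using tpos[of n] by (simp add: divide_inverse_commute)
    ultimately have "norm ((f (x + t n *\<^sub>R vs n) - f x - D (t n *\<^sub>R vs n)) /\<^sub>R t n) \<le> e / 2"
      by linarith
    then show ?case using \<open>e > 0\<close> by simp
  qed
qed

lemma has_derivative_difference_quotient_tendsto:
  fixes f :: "'a::real_normed_vector \<Rightarrow> 'b::real_normed_vector"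
  assumes der: "(f has_derivative D) (at x)" and tpos: "\<And>n. t n > 0"
    and t0: "t \<longlonglongrightarrow> 0" and vs: "vs \<longlonglongrightarrow> v"
  shows "(\<lambda>n. (f (x + t n *\<^sub>R vs n) - f x) /\<^sub>R t n) \<longlonglongrightarrow> D v"
proof -
  have lin: "bounded_linear D" using der by (rule has_derivative_bounded_linear)
  have "(\<lambda>n. (f (x + t n *\<^sub>R vs n) - f x - D (t n *\<^sub>R vs n)) /\<^sub>R t n + D (vs n)) \<longlonglongrightarrow> 0 + D v"
    by (intro tendsto_add has_derivative_remainder_quotient_tendsto[OF der tpos t0 vs]
        bounded_linear.tendsto[OF lin vs])
  moreover have "(f (x + t n *\<^sub>R vs n) - f x - D (t n *\<^sub>R vs n)) /\<^sub>R t n + D (vs n)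
                   = (f (x + t n *\<^sub>R vs n) - f x) /\<^sub>R t n" for n
    using tpos[of n] by (simp add: linear_simps(5)[OF lin] algebra_simps)
  ultimately show ?thesis by simp
qed

lemma local_min_on_eventually:
  assumes "local_min_on f C x" and "(g \<longlongrightarrow> x) F" and "eventually (\<lambda>s. g s \<in> C) F"
  shows "eventually (\<lambda>s. f x \<le> f (g s)) F"
proof -
  obtain \<epsilon> where "\<epsilon> > 0" and min: "\<And>y. y \<in> C \<Longrightarrow> dist y x < \<epsilon> \<Longrightarrow> f x \<le> f y"
    using assms(1) unfolding local_min_on_def by blast
  have "eventually (\<lambda>s. dist (g s) x < \<epsilon>) F"
    using assms(2) \<open>\<epsilon> > 0\<close> by (rule tendstoD)
  with assms(3) show ?thesis by eventually_elim (rule min)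
qed

lemma local_min_on_tangent_cone_derivative_nonneg:
  fixes f :: "'a::real_normed_vector \<Rightarrow> real"
  assumes "local_min_on f C x" and der: "(f has_derivative D) (at x)"
    and "v \<in> tangent_cone C x"
  shows "D v \<ge> 0"
proof -
  obtain t vs where tpos: "\<And>n. t n > 0" and t0: "t \<longlonglongrightarrow> 0" and vs: "vs \<longlonglongrightarrow> v"
    and inC: "\<And>n. x + t n *\<^sub>R vs n \<in> C"
    using assms(3) unfolding tangent_cone_def by blast
  have "(\<lambda>n. x + t n *\<^sub>R vs n) \<longlonglongrightarrow> x + 0 *\<^sub>R v"
    by (intro tendsto_intros t0 vs)
  then have "eventually (\<lambda>n. f x \<le> f (x + t n *\<^sub>R vs n)) sequentially"
    by (intro local_min_on_eventually[OF assms(1)]) (auto simp: inC)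
  then have "eventually (\<lambda>n. 0 \<le> (f (x + t n *\<^sub>R vs n) - f x) /\<^sub>R t n) sequentially"
    by eventually_elim (simp add: tpos less_imp_le)
  with has_derivative_difference_quotient_tendsto[OF der tpos t0 vs]
  show ?thesis by (rule tendsto_lowerbound) simp
qed

lemma tangent_cone_mono: "C \<subseteq> D \<Longrightarrow> tangent_cone C x \<subseteq> tangent_cone D x"
  unfolding tangent_cone_def by blast

lemma tangent_cone_convex_feasible:
  assumes "convex C" and "x \<in> C" and "x + u \<in> C"
  shows "u \<in> tangent_cone C x"
  unfolding tangent_cone_def
proof (intro CollectI exI conjI allI)
  show "(\<lambda>n. 1 / (real n + 1)) \<longlonglongrightarrow> 0"
    using LIMSEQ_inverse_real_of_nat by (simp add: inverse_eq_divide add.commute)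
  show "x + (1 / (real n + 1)) *\<^sub>R u \<in> C" for n
    using convexD_alt[OF assms(1) assms(2) assms(3), of "1 / (real n + 1)"]
    by (simp add: algebra_simps)
qed auto

lemma tangent_cone_affine_line:
  assumes "affine L" and "closed L" and "x \<in> L" and "v \<in> tangent_cone L x"
  shows "x + a *\<^sub>R v \<in> L"
proof -
  obtain t vs where tpos: "\<And>n. t n > 0" and vs: "vs \<longlonglongrightarrow> v"
    and inL: "\<And>n. x + t n *\<^sub>R vs n \<in> L"
    using assms(4) unfolding tangent_cone_def by blast
  have "x + a *\<^sub>R vs n \<in> L" for n
  proof -
    have "(1 - a / t n) *\<^sub>R x + (a / t n) *\<^sub>R (x + t n *\<^sub>R vs n) \<in> L"
      using assms(1) assms(3) inL unfolding affine_def by simp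
    also have "(1 - a / t n) *\<^sub>R x + (a / t n) *\<^sub>R (x + t n *\<^sub>R vs n) = x + a *\<^sub>R vs n"
      using tpos[of n] by (simp add: algebra_simps)
    finally show ?thesis .
  qed
  moreover have "(\<lambda>n. x + a *\<^sub>R vs n) \<longlonglongrightarrow> x + a *\<^sub>R v"
    by (intro tendsto_intros vs)
  ultimately show ?thesis
    by (rule closed_sequentially[OF assms(2), of "\<lambda>n. x + a *\<^sub>R vs n"])
qed

lemma tangent_cone_halfspace_eventually:
  fixes g :: "'a::real_normed_vector \<Rightarrow>\<^sub>L real"
  assumes "C \<subseteq> {y. g y \<le> \<alpha>}" and "x \<in> C" and "v \<in> tangent_cone C x"
  shows "eventually (\<lambda>s. g (x + s *\<^sub>R v) \<le> \<alpha>) (at_right 0)"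
proof -
  have gx: "g x \<le> \<alpha>" using assms(1,2) by blast
  have g_line: "g (x + s *\<^sub>R v) = g x + s * g v" for s
    by (simp add: blinfun.add_right blinfun.scaleR_right)
  show ?thesis
  proof (cases "g v \<le> 0")
    case True
    show ?thesis using eventually_at_right_less
    proof (rule eventually_mono)
      fix s :: real assume "0 < s"
      then have "s * g v \<le> 0" using True by (simp add: mult_nonneg_nonpos)
      then show "g (x + s *\<^sub>R v) \<le> \<alpha>" using gx g_line by simp
    qed
  next
    case False
    obtain t vs where tpos: "\<And>n. t n > 0" and vs: "vs \<longlonglongrightarrow> v"
      and inC: "\<And>n. x + t n *\<^sub>R vs n \<in> C"
      using assms(3) unfolding tangent_cone_def by blast
    \<comment> \<open>a constraint active at \<open>x\<close> only admits tangent directions with \<open>g v \<le> 0\<close>\<close>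
    have "g x < \<alpha>"
    proof (rule ccontr)
      assume "\<not> g x < \<alpha>"
      with gx have active: "g x = \<alpha>" by simp
      have "g (vs n) \<le> 0" for n
      proof -
        have "g (x + t n *\<^sub>R vs n) \<le> \<alpha>" using assms(1) inC[of n] by blast
        then have "t n * g (vs n) \<le> 0"
          using active by (simp add: blinfun.add_right blinfun.scaleR_right)
        then show ?thesis using tpos[of n] by (simp add: mult_le_0_iff)
      qed
      moreover have "(\<lambda>n. g (vs n)) \<longlonglongrightarrow> g v"
        by (intro blinfun.tendsto tendsto_const vs)
      ultimately have "g v \<le> 0" by (intro LIMSEQ_le_const2) auto
      with False show False by simp
    qed
    moreover have "((\<lambda>s. g x + s * g v) \<longlongrightarrow> g x + 0 * g v) (at_right 0)"
      by (intro tendsto_intros)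
    ultimately have "eventually (\<lambda>s. g x + s * g v < \<alpha>) (at_right 0)"
      by (intro order_tendstoD(2)) simp_all
    then show ?thesis by eventually_elim (simp add: g_line)
  qed
qed

lemma gen_polyhedral_convex:
  assumes "gen_polyhedral C"
  shows "convex C"
proof -
  obtain L m g \<alpha> where "affine L"
    and C: "C = L \<inter> (\<Inter>i<(m::nat). blinfun_apply (g i) -` {..(\<alpha>::nat \<Rightarrow> real) i})"
    using assms unfolding gen_polyhedral_def by blast
  have "convex (blinfun_apply (g i) -` {..\<alpha> i})" for i
    by (simp add: convex_linear_vimage blinfun.bounded_linear_right bounded_linear.linear)
  with affine_imp_convex[OF \<open>affine L\<close>] show ?thesis
    unfolding C by (intro convex_Int convex_INT)
qed

lemma gen_polyhedral_tangent_cone_eventually: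
  assumes "gen_polyhedral C" and "x \<in> C" and "v \<in> tangent_cone C x"
  shows "eventually (\<lambda>s. x + s *\<^sub>R v \<in> C) (at_right 0)"
proof -
  obtain L m g \<alpha> where L: "affine L" "closed L"
    and C: "C = {x \<in> L. \<forall>i<(m::nat). blinfun_apply (g i) x \<le> (\<alpha>::nat \<Rightarrow> real) i}"
    using assms(1) unfolding gen_polyhedral_def by blast
  have "v \<in> tangent_cone L x"
    using tangent_cone_mono[of C L] assms(3) C by blast
  then have line: "x + s *\<^sub>R v \<in> L" for s
    using tangent_cone_affine_line[OF L] assms(2) C by blast
  have "\<forall>i\<in>{..<m}. eventually (\<lambda>s. g i (x + s *\<^sub>R v) \<le> \<alpha> i) (at_right 0)"
    by (intro ballI tangent_cone_halfspace_eventually[OF _ assms(2,3)]) (auto simp: C)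
  then have "eventually (\<lambda>s. \<forall>i\<in>{..<m}. g i (x + s *\<^sub>R v) \<le> \<alpha> i) (at_right 0)"
    by (rule eventually_ball_finite[rotated]) simp
  then show ?thesis by eventually_elim (auto simp: C line)
qed

lemma second_order_tangent_set_convex_nonneg:
  fixes l :: "'a::real_normed_vector \<Rightarrow>\<^sub>L real"
  assumes "convex C" and "x \<in> C" and nonneg: "\<And>u. u \<in> tangent_cone C x \<Longrightarrow> l u \<ge> 0"
    and "l v = 0" and "w \<in> second_order_tangent_set C x v"
  shows "l w \<ge> 0"
proof -
  obtain t ws where tpos: "\<And>n. t n > 0" and ws: "ws \<longlonglongrightarrow> w"
    and inC: "\<And>n. x + (t n *\<^sub>R v + ((t n)\<^sup>2 / 2) *\<^sub>R ws n) \<in> C"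
    using assms(5) unfolding second_order_tangent_set_def by (auto simp: add.assoc)
  have "l (ws n) \<ge> 0" for n
  proof -
    have "0 \<le> l (t n *\<^sub>R v + ((t n)\<^sup>2 / 2) *\<^sub>R ws n)"
      by (rule nonneg[OF tangent_cone_convex_feasible[OF assms(1,2) inC]])
    also have "\<dots> = ((t n)\<^sup>2 / 2) * l (ws n)"
      using assms(4) by (simp add: blinfun.add_right blinfun.scaleR_right)
    finally show ?thesis using tpos[of n] by (simp add: zero_le_mult_iff)
  qed
  moreover have "(\<lambda>n. l (ws n)) \<longlonglongrightarrow> l w"
    by (intro blinfun.tendsto tendsto_const ws)
  ultimately show ?thesis by (intro LIMSEQ_le_const) auto
qed

lemma has_real_derivative_along_line:
  assumes "(f has_derivative D) (at (x + s *\<^sub>R v))"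
  shows "((\<lambda>s. f (x + s *\<^sub>R v)) has_real_derivative D v) (at s)"
proof -
  have "((\<lambda>s. x + s *\<^sub>R v) has_derivative (\<lambda>h. h *\<^sub>R v)) (at s)"
    by (auto intro!: derivative_eq_intros)
  from has_derivative_compose[OF this assms]
  have "((\<lambda>s. f (x + s *\<^sub>R v)) has_derivative (\<lambda>h. D (h *\<^sub>R v))) (at s)" .
  moreover have "(\<lambda>h. D (h *\<^sub>R v)) = (*) (D v)"
    using linear_simps(5)[OF has_derivative_bounded_linear[OF assms]] by (auto simp: mult.commute)
  ultimately show ?thesis by (simp add: has_field_derivative_def)
qed

lemma eventually_less_at_right_of_negative_second_derivative:
  fixes \<phi> \<psi> :: "real \<Rightarrow> real"
  assumes \<phi>: "\<And>s. (\<phi> has_real_derivative \<psi> s) (at s)" and "\<psi> a = 0"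
    and \<psi>: "(\<psi> has_real_derivative c) (at a)" and "c < 0"
  shows "eventually (\<lambda>s. \<phi> s < \<phi> a) (at_right a)"
proof -
  obtain d where "d > 0" and dec: "\<And>h. h > 0 \<Longrightarrow> h < d \<Longrightarrow> \<psi> (a + h) < 0"
    using DERIV_neg_dec_right[OF \<psi> \<open>c < 0\<close>] \<open>\<psi> a = 0\<close> by auto
  have "\<phi> s < \<phi> a" if "s \<in> {a<..<a + d}" for s
  proof -
    have "a < s" using that by simp
    then obtain z where z: "a < z" "z < s" and mvt: "\<phi> s - \<phi> a = (s - a) * \<psi> z"
      using MVT2[of a s \<phi> \<psi>] \<phi> by blast
    have "\<psi> z < 0" using dec[of "z - a"] z that by auto
    then have "(s - a) * \<psi> z < 0" using \<open>a < s\<close> by (intro mult_pos_neg) auto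
    with mvt show ?thesis by simp
  qed
  then show ?thesis
    using eventually_mono[OF eventually_at_right_real[of a "a + d"]] \<open>d > 0\<close> by simp
qed

lemma local_min_on_second_derivative_nonneg:
  fixes f :: "'a::real_normed_vector \<Rightarrow> real"
  assumes "local_min_on f C x"
    and Df: "\<And>y. (f has_derivative blinfun_apply (Df y)) (at y)"
    and D2f: "(Df has_derivative blinfun_apply D2) (at x)"
    and ray: "eventually (\<lambda>s. x + s *\<^sub>R v \<in> C) (at_right 0)" and "Df x v = 0"
  shows "D2 v v \<ge> 0"
proof (rule ccontr)
  assume "\<not> D2 v v \<ge> 0"
  have "((\<lambda>y. Df y v) has_derivative (\<lambda>h. D2 h v)) (at (x + 0 *\<^sub>R v))"
    using blinfun.FDERIV[OF D2f has_derivative_const[of v]] by simp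
  then have "((\<lambda>s. Df (x + s *\<^sub>R v) v) has_real_derivative D2 v v) (at 0)"
    by (rule has_real_derivative_along_line)
  moreover have "((\<lambda>s. f (x + s *\<^sub>R v)) has_real_derivative Df (x + s *\<^sub>R v) v) (at s)" for s
    by (rule has_real_derivative_along_line[OF Df])
  ultimately have "eventually (\<lambda>s. f (x + s *\<^sub>R v) < f (x + 0 *\<^sub>R v)) (at_right 0)"
    using \<open>\<not> D2 v v \<ge> 0\<close> \<open>Df x v = 0\<close>
    by (intro eventually_less_at_right_of_negative_second_derivative) auto
  moreover have "((\<lambda>s. x + s *\<^sub>R v) \<longlongrightarrow> x) (at_right 0)"
    by (auto intro!: tendsto_eq_intros)
  then have "eventually (\<lambda>s. f x \<le> f (x + s *\<^sub>R v)) (at_right 0)"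
    by (rule local_min_on_eventually[OF assms(1) _ ray])
  ultimately have "eventually (\<lambda>s. False) (at_right (0::real))"
    by eventually_elim simp
  then show False by simp
qed

theorem theorem3p3:
  fixes f :: "'a::banach \<Rightarrow> real"
    and Df :: "'a \<Rightarrow> ('a \<Rightarrow>\<^sub>L real)"
    and D2f :: "'a \<Rightarrow> ('a \<Rightarrow>\<^sub>L ('a \<Rightarrow>\<^sub>L real))"
    and C :: "'a set" and xb :: 'a
  assumes "C \<noteq> {}" and "gen_polyhedral C"
    and "\<And>x. (f has_derivative blinfun_apply (Df x)) (at x)"
    and "\<And>x. (Df has_derivative blinfun_apply (D2f x)) (at x)"
    and "continuous_on UNIV D2f"
    and "local_min_on f C xb"
  shows "(\<forall>v\<in>tangent_cone C xb. Df xb v \<ge> 0)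
     \<and> (\<forall>v\<in>tangent_cone C xb. Df xb v = 0 \<longrightarrow>
           (\<forall>w\<in>second_order_tangent_set C xb v. Df xb w \<ge> 0))
     \<and> (\<forall>v\<in>tangent_cone C xb. Df xb v = 0 \<longrightarrow> D2f xb v v \<ge> 0)"
proof (intro conjI ballI impI)
  have "xb \<in> C" using assms(6) unfolding local_min_on_def by blast
  show first_order: "Df xb v \<ge> 0" if "v \<in> tangent_cone C xb" for v
    using local_min_on_tangent_cone_derivative_nonneg[OF assms(6) assms(3) that] .
  show "Df xb w \<ge> 0"
    if "Df xb v = 0" and "w \<in> second_order_tangent_set C xb v" for v w
    using second_order_tangent_set_convex_nonneg[OF gen_polyhedral_convex[OF assms(2)]
        \<open>xb \<in> C\<close> first_order that] .
  show "D2f xb v v \<ge> 0" if "v \<in> tangent_cone C xb" and "Df xb v = 0" for v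
    using local_min_on_second_derivative_nonneg[OF assms(6) assms(3) assms(4)
        gen_polyhedral_tangent_cone_eventually[OF assms(2) \<open>xb \<in> C\<close> that(1)] that(2)] .
qed

end
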